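(* For any skew-symmetric matrix $M$ with label set $\mathsf{N}$, the tensors $\sum_{I\subseteq\mathsf{N}}\operatorname{Pf}(M_I)\langle I|$ and $\sum_{I\subseteq\mathsf{N}}\operatorname{Pf}(M_{\bar I})|I\rangle$ are morphisms of $\mathscr{P}$. Consequently $\mathscr{P}$ is a dagger monoidal category (with the usual dagger of linear maps).
   Context: For $i\in\mathbb{N}$ let $V_i\cong\mathbb{C}^2$ with orthonormal basis $v_{i,0},v_{i,1}$, and for a finite ordered $\mathsf{N}\subset\mathbb{N}$ let $V_\mathsf{N}=\bigotimes_{i\in\mathsf{N}}V_i$. For $I\subseteq\mathsf{N}$, $|I\rangle=\bigotimes_{i\in\mathsf{N}}v_{i,\chi(i,I)}$ and $\langle I|=\bigotimes_{i\in\mathsf{N}}v^*_{i,\chi(i,I)}$, $\chi$ the indicator of $I$. For a skew-symmetric matrix $M$ with rows and columns labeled by $\mathsf{N}$ (same order), $M_I$ is the principal submatrix on labels $I$ and $M_{\bar I}$ the principal submatrix with labels $I$ deleted; $\operatorname{sPf}(M)=\sum_{I\subseteq\mathsf{N}}\operatorname{Pf}(M_I)|I\rangle$ and $\operatorname{sPf}^\vee(M)=\sum_{I\subseteq\mathsf{N}}\operatorname{Pf}(M_{\bar I})\langle I|$ (Pfaffian of the empty matrix $1$, of odd-size matrices $0$). $\mathscr{P}$ is the monoidal subcategory of $\mathrm{Vect}_\mathbb{C}$ with objects the $V_\mathsf{N}$ and morphisms generated under composition (tensor contraction) and tensor product by all $\operatorname{sPf}(M)$ and $\operatorname{sPf}^\vee(M)$.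 *)

theory Defs
  imports Complex_Main
begin

text \<open>Tensors between tensor powers of C^2. The object V_N (N a finite ordered label set
  with |N| = n) is represented positionally by n; the basis vector |I> of V_N, I a subset of N,
  is represented by the set of positions of I, a subset of {..<n}. A morphism V_n -> V_m is
  a record with domain n, codomain m and coefficients coef J I = <J| f |I>
  (J subset of {..<m}, I subset of {..<n}; coefficients vanish outside these).\<close>

record mor =
  dom :: nat
  cod :: nat
  coef :: "nat set \<Rightarrow> nat set \<Rightarrow> complex"

function pf :: "(nat \<Rightarrow> nat \<Rightarrow> 'a::comm_ring_1) \<Rightarrow> nat list \<Rightarrow> 'a" where
  "pf A [] = 1"
| "pf A (x # xs) =
     (\<Sum>j<length xs. (-1) ^ j * A x (xs ! j) * pf A (take j xs @ drop (Suc j) xs))"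
  by pat_completeness auto
termination
  by (relation "measure (\<lambda>(A, xs). length xs)") auto

definition Pf_sub :: "(nat \<Rightarrow> nat \<Rightarrow> complex) \<Rightarrow> nat set \<Rightarrow> complex" where
  "Pf_sub M I = pf M (sorted_list_of_set I)"

definition skew :: "nat \<Rightarrow> (nat \<Rightarrow> nat \<Rightarrow> complex) \<Rightarrow> bool" where
  "skew n M \<longleftrightarrow> (\<forall>i<n. \<forall>j<n. M i j = - M j i)"

definition sPf :: "nat \<Rightarrow> (nat \<Rightarrow> nat \<Rightarrow> complex) \<Rightarrow> mor" where
  "sPf n M = \<lparr>dom = 0, cod = n,
     coef = (\<lambda>J I. if I = {} \<and> J \<subseteq> {..<n} then Pf_sub M J else 0)\<rparr>"

definition sPfv :: "nat \<Rightarrow> (nat \<Rightarrow> nat \<Rightarrow> complex) \<Rightarrow> mor" where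
  "sPfv n M = \<lparr>dom = n, cod = 0,
     coef = (\<lambda>J I. if J = {} \<and> I \<subseteq> {..<n} then Pf_sub M ({..<n} - I) else 0)\<rparr>"

definition sPf_bra :: "nat \<Rightarrow> (nat \<Rightarrow> nat \<Rightarrow> complex) \<Rightarrow> mor" where
  "sPf_bra n M = \<lparr>dom = n, cod = 0,
     coef = (\<lambda>J I. if J = {} \<and> I \<subseteq> {..<n} then Pf_sub M I else 0)\<rparr>"

definition sPfv_ket :: "nat \<Rightarrow> (nat \<Rightarrow> nat \<Rightarrow> complex) \<Rightarrow> mor" where
  "sPfv_ket n M = \<lparr>dom = 0, cod = n,
     coef = (\<lambda>J I. if I = {} \<and> J \<subseteq> {..<n} then Pf_sub M ({..<n} - J) else 0)\<rparr>"

definition idm :: "nat \<Rightarrow> mor" where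
  "idm n = \<lparr>dom = n, cod = n, coef = (\<lambda>J I. if I = J \<and> J \<subseteq> {..<n} then 1 else 0)\<rparr>"

definition comp :: "mor \<Rightarrow> mor \<Rightarrow> mor" where
  "comp g f = \<lparr>dom = dom f, cod = cod g,
     coef = (\<lambda>K I. if K \<subseteq> {..<cod g} \<and> I \<subseteq> {..<dom f}
                    then (\<Sum>J\<in>Pow {..<cod f}. coef g K J * coef f J I) else 0)\<rparr>"

text \<open>Tensor product f (x) g : V_(n+n') -> V_(m+m'); the factors of f come first.\<close>
definition tens :: "mor \<Rightarrow> mor \<Rightarrow> mor" where
  "tens f g = \<lparr>dom = dom f + dom g, cod = cod f + cod g,
     coef = (\<lambda>J I. coef f (J \<inter> {..<cod f}) (I \<inter> {..<dom f}) *
                   coef g ((\<lambda>x. x - cod f) ` (J - {..<cod f})) ((\<lambda>x. x - dom f) ` (I - {..<dom f})))\<rparr>"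

definition dagger :: "mor \<Rightarrow> mor" where
  "dagger f = \<lparr>dom = cod f, cod = dom f, coef = (\<lambda>I J. cnj (coef f J I))\<rparr>"

inductive_set Pmor :: "mor set" where
  gen_sPf: "skew n M \<Longrightarrow> sPf n M \<in> Pmor"
| gen_sPfv: "skew n M \<Longrightarrow> sPfv n M \<in> Pmor"
| gen_id: "idm n \<in> Pmor"
| gen_comp: "f \<in> Pmor \<Longrightarrow> g \<in> Pmor \<Longrightarrow> cod f = dom g \<Longrightarrow> comp g f \<in> Pmor"
| gen_tens: "f \<in> Pmor \<Longrightarrow> g \<in> Pmor \<Longrightarrow> tens f g \<in> Pmor"

end

theory Submission
  imports Defs
begin

text \<open>Let P be the skew matrix on 2n labels pairing i with i + n (entry \<i>). A Pfaffian of P on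
  L \<union> (I + n) vanishes unless L = I, and is then 1 or \<i> according to the parity of |I|; so
  sPf(P) and sPf^v(P) are, up to these constants, the cup and cap of V_n. Bending the legs
  of sPf(M) with the cap gives \<Sum>_I Pf(M_I) <I|, bending sPf^v(M) with the cup gives
  \<Sum>_I Pf(M_(N - I)) |I>, each times a constant depending on a parity that is fixed on the
  support, because Pfaffians of odd size vanish. Scalars are morphisms (a 2-label sPf^v
  applied to the vacuum), so the constant can be divided out. Since the dagger exchanges
  sPf(M) with \<Sum>_I Pf(conj M_I) <I| and sPf^v(M) with the corresponding ket, and reverses
  compositions, the category is closed under the dagger.\<close>

lemma pf_eq_0_if_odd_length: "odd (length xs) \<Longrightarrow> pf A xs = 0"
proof (induction A xs rule: pf.induct)
  case (2 A x xs)
  have "pf A (take j xs @ drop (Suc j) xs) = 0" if "j < length xs" for j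
    using 2 that by (intro "2.IH") auto
  then show ?case by simp
qed simp

lemma Pf_sub_eq_0_if_odd_card: "finite S \<Longrightarrow> odd (card S) \<Longrightarrow> Pf_sub M S = 0"
  unfolding Pf_sub_def by (rule pf_eq_0_if_odd_length) simp

lemma in_set_take_drop_if_ne_nth:
  "z \<in> set xs \<Longrightarrow> j < length xs \<Longrightarrow> z \<noteq> xs ! j \<Longrightarrow> z \<in> set (take j xs @ drop (Suc j) xs)"
proof -
  assume "z \<in> set xs" "j < length xs" "z \<noteq> xs ! j"
  moreover from \<open>j < length xs\<close> have "xs = take j xs @ xs ! j # drop (Suc j) xs"
    by (rule id_take_nth_drop)
  ultimately show ?thesis by (metis Un_iff set_ConsD set_append)
qed

lemma pf_eq_0_if_zero_row:
  "z \<in> set xs \<Longrightarrow> \<forall>w\<in>set xs. A z w = 0 \<and> A w z = 0 \<Longrightarrow> pf A xs = 0"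
proof (induction A xs rule: pf.induct)
  case (2 A x xs)
  have "A x (xs ! j) * pf A (take j xs @ drop (Suc j) xs) = 0" if j: "j < length xs" for j
  proof (cases "z = x \<or> z = xs ! j")
    case True
    then show ?thesis using 2(3) j by (auto simp: nth_mem)
  next
    case False
    then have "z \<in> set (take j xs @ drop (Suc j) xs)"
      using 2(2) j in_set_take_drop_if_ne_nth[of z xs j] by auto
    moreover have "\<forall>w\<in>set (take j xs @ drop (Suc j) xs). A z w = 0 \<and> A w z = 0"
      using 2(3) by (auto dest: in_set_takeD in_set_dropD)
    ultimately show ?thesis using 2(1) j by simp
  qed
  then show ?case by (simp add: mult.assoc)
qed simp

lemma cnj_pf: "cnj (pf A xs) = pf (\<lambda>i j. cnj (A i j)) xs"
  by (induction A xs rule: pf.induct) (simp_all add: cnj_sum)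

definition pairing :: "nat \<Rightarrow> nat \<Rightarrow> nat \<Rightarrow> complex" where
  "pairing n i j = (if i < n \<and> j = i + n then \<i> else if j < n \<and> i = j + n then -\<i> else 0)"

text \<open>With entries \<i> instead of 1, the Pfaffian of a perfect matching of k pairs depends
  only on the parity of k.\<close>

definition pairing_const :: "nat \<Rightarrow> complex" where
  "pairing_const k = (if even k then 1 else \<i>)"

lemma skew_pairing: "skew m (pairing n)"
  unfolding skew_def pairing_def by auto

lemma pairing_const_nonzero: "pairing_const k \<noteq> 0"
  by (simp add: pairing_const_def)

lemma pf_pairing_diagonal:
  "distinct xs \<Longrightarrow> set xs \<subseteq> {..<n} \<Longrightarrow>
    pf (pairing n) (xs @ map (\<lambda>x. x + n) xs) = pairing_const (length xs)"
proof (induction xs)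
  case (Cons x xs)
  define ys where "ys = xs @ (x + n) # map (\<lambda>x. x + n) xs"
  have "x < n" using Cons.prems by auto
  have "distinct ys" using Cons.prems unfolding ys_def by (auto simp: distinct_map inj_on_def)
  have "length ys = Suc (2 * length xs)" unfolding ys_def by simp
  have partner: "ys ! length xs = x + n" unfolding ys_def by (simp add: nth_append)
  have off_partner: "pairing n x (ys ! j) = 0" if "j < length ys" "j \<noteq> length xs" for j
  proof -
    have "ys ! j \<noteq> ys ! length xs"
      using that nth_eq_iff_index_eq[OF \<open>distinct ys\<close>] \<open>length ys = _\<close> by auto
    then show ?thesis using partner \<open>x < n\<close> by (auto simp: pairing_def)
  qed
  have "pf (pairing n) (x # ys) = (\<Sum>j<length ys. if j = length xs
      then (-1) ^ j * pairing n x (ys ! j) * pf (pairing n) (take j ys @ drop (Suc j) ys) else 0)"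
    unfolding pf.simps by (rule sum.cong) (auto simp: off_partner)
  also have "\<dots> = (-1) ^ length xs * pairing n x (x + n) *
      pf (pairing n) (take (length xs) ys @ drop (Suc (length xs)) ys)"
    using \<open>length ys = _\<close> partner by auto
  also have "\<dots> = (-1) ^ length xs * \<i> * pairing_const (length xs)"
    using Cons \<open>x < n\<close> by (simp add: ys_def pairing_def[of n x])
  also have "\<dots> = pairing_const (length (x # xs))"
    by (simp add: pairing_const_def)
  finally show ?case by (simp add: ys_def)
qed (simp add: pairing_const_def)

lemma sorted_list_of_set_Un_shift:
  assumes "I \<subseteq> {..<(n::nat)}"
  shows "sorted_list_of_set (I \<union> (\<lambda>x. x + n) ` I)
    = sorted_list_of_set I @ map (\<lambda>x. x + n) (sorted_list_of_set I)"
proof -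
  define xs where "xs = sorted_list_of_set I"
  have "finite I" using assms finite_subset by blast
  then have "set xs = I" "sorted xs" "distinct xs" by (simp_all add: xs_def)
  have "sorted_list_of_set (I \<union> (\<lambda>x. x + n) ` I) = xs @ map (\<lambda>x. x + n) xs"
  proof (rule sorted_distinct_set_unique)
    show "sorted (xs @ map (\<lambda>x. x + n) xs)"
      using \<open>sorted xs\<close> \<open>set xs = I\<close> assms by (auto simp: sorted_append sorted_map intro: monoI)
    show "distinct (xs @ map (\<lambda>x. x + n) xs)"
      using \<open>distinct xs\<close> \<open>set xs = I\<close> assms by (auto simp: distinct_map inj_on_def)
    show "set (sorted_list_of_set (I \<union> (\<lambda>x. x + n) ` I)) = set (xs @ map (\<lambda>x. x + n) xs)"
      using \<open>finite I\<close> \<open>set xs = I\<close> by simp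
  qed simp_all
  then show ?thesis by (simp add: xs_def)
qed

lemma Pf_sub_pairing:
  assumes I: "I \<subseteq> {..<n}" and L: "L \<subseteq> {..<n}"
  shows "Pf_sub (pairing n) (L \<union> (\<lambda>x. x + n) ` I) = (if L = I then pairing_const (card I) else 0)"
proof (cases "L = I")
  case True
  have "finite I" using I finite_subset by blast
  then show ?thesis
    using True I by (simp add: Pf_sub_def sorted_list_of_set_Un_shift pf_pairing_diagonal)
next
  case False
  \<comment> \<open>an unpaired label has a zero row and column in the principal submatrix\<close>
  obtain z where z: "z \<in> L \<union> (\<lambda>x. x + n) ` I"
    and row: "\<forall>w \<in> L \<union> (\<lambda>x. x + n) ` I. pairing n z w = 0 \<and> pairing n w z = 0"
  proof (cases "L \<subseteq> I")
    case True
    with False obtain x where "x \<in> I" "x \<notin> L" by blast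
    show ?thesis
      by (rule that[of "x + n"]) (use \<open>x \<in> I\<close> \<open>x \<notin> L\<close> I L in \<open>auto simp: pairing_def\<close>)
  next
    case False
    then obtain x where "x \<in> L" "x \<notin> I" by blast
    show ?thesis
      by (rule that[of x]) (use \<open>x \<in> L\<close> \<open>x \<notin> I\<close> I L in \<open>auto simp: pairing_def\<close>)
  qed
  have "finite (L \<union> (\<lambda>x. x + n) ` I)" using I L finite_subset by blast
  then show ?thesis
    using False z row by (simp add: Pf_sub_def pf_eq_0_if_zero_row[of z])
qed

lemma Int_Un_shift_shift_back:
  "K = (K \<inter> {..<n}) \<union> (\<lambda>x. x + n) ` ((\<lambda>x. x - n) ` (K - {..<(n::nat)}))"
  by (auto simp: image_image image_iff)

lemma shift_back_Un_shift:
  "L \<subseteq> {..<n} \<Longrightarrow> (\<lambda>x. x - n) ` ((L \<union> (\<lambda>x. x + n) ` J) - {..<(n::nat)}) = J"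
proof -
  assume "L \<subseteq> {..<n}"
  then have "(L \<union> (\<lambda>x. x + n) ` J) - {..<n} = (\<lambda>x. x + n) ` J" by auto
  then show ?thesis by (simp add: image_image)
qed

lemma Diff_Un_shift:
  assumes "L \<subseteq> {..<(n::nat)}" "I \<subseteq> {..<n}"
  shows "{..<2*n} - (L \<union> (\<lambda>x. x + n) ` I) = ({..<n} - L) \<union> (\<lambda>x. x + n) ` ({..<n} - I)"
proof (rule set_eqI)
  fix x :: nat
  show "x \<in> {..<2*n} - (L \<union> (\<lambda>x. x + n) ` I) \<longleftrightarrow> x \<in> ({..<n} - L) \<union> (\<lambda>x. x + n) ` ({..<n} - I)"
  proof (cases "x < n")
    case False
    then have "x \<in> (\<lambda>x. x + n) ` S \<longleftrightarrow> x - n \<in> S" for S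
      by (auto simp: image_iff) (metis le_add_diff_inverse2 not_less)
    then show ?thesis using False assms by auto
  qed (use assms in auto)
qed

definition cup :: "nat \<Rightarrow> mor" where
  "cup n = sPf (2*n) (pairing n)"

definition cap :: "nat \<Rightarrow> mor" where
  "cap n = sPfv (2*n) (pairing n)"

lemma coef_cap_times_tens_idm:
  assumes "dom f = 0" "cod f = n" "K \<subseteq> {..<2*n}" "I \<subseteq> {..<n}"
  shows "coef (cap n) {} K * coef (tens f (idm n)) K I
    = (if K = I \<union> (\<lambda>x. x + n) ` I then pairing_const (n - card I) * coef f I {} else 0)"
proof (cases "(\<lambda>x. x - n) ` (K - {..<n}) = I")
  case True
  define L where "L = K \<inter> {..<n}"
  have K: "K = L \<union> (\<lambda>x. x + n) ` I"
    using Int_Un_shift_shift_back[of K n] True by (simp add: L_def)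
  have "L \<subseteq> {..<n}" by (simp add: L_def)
  have "card ({..<n} - I) = n - card I"
    using assms(4) by (simp add: card_Diff_subset finite_subset)
  then have "coef (cap n) {} K = (if L = I then pairing_const (n - card I) else 0)"
    using assms(3,4) \<open>L \<subseteq> _\<close> Pf_sub_pairing[of "{..<n} - I" n "{..<n} - L"]
    by (auto simp: cap_def sPfv_def K Diff_Un_shift)
  moreover have "coef (tens f (idm n)) K I = coef f L {}"
    using True assms by (simp add: tens_def idm_def L_def)
  moreover have "K = I \<union> (\<lambda>x. x + n) ` I \<longleftrightarrow> L = I"
    using K \<open>L \<subseteq> _\<close> assms(4) by auto
  ultimately show ?thesis by auto
next
  case False
  then have "coef (tens f (idm n)) K I = 0"
    using assms by (simp add: tens_def idm_def)
  moreover have "K \<noteq> I \<union> (\<lambda>x. x + n) ` I"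
    using False shift_back_Un_shift[OF assms(4), of I] by auto
  ultimately show ?thesis by simp
qed

lemma coef_tens_idm_times_cup:
  assumes "dom g = n" "cod g = 0" "K \<subseteq> {..<2*n}" "J \<subseteq> {..<n}"
  shows "coef (tens g (idm n)) J K * coef (cup n) K {}
    = (if K = J \<union> (\<lambda>x. x + n) ` J then pairing_const (card J) * coef g {} J else 0)"
proof (cases "(\<lambda>x. x - n) ` (K - {..<n}) = J")
  case True
  define L where "L = K \<inter> {..<n}"
  have K: "K = L \<union> (\<lambda>x. x + n) ` J"
    using Int_Un_shift_shift_back[of K n] True by (simp add: L_def)
  have "L \<subseteq> {..<n}" by (simp add: L_def)
  then have "coef (cup n) K {} = (if L = J then pairing_const (card J) else 0)"
    using assms(3,4) Pf_sub_pairing[of J n L] by (simp add: cup_def sPf_def K)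
  moreover have "coef (tens g (idm n)) J K = coef g {} L"
    using True assms by (simp add: tens_def idm_def L_def)
  moreover have "K = J \<union> (\<lambda>x. x + n) ` J \<longleftrightarrow> L = J"
    using K \<open>L \<subseteq> _\<close> assms(4) by auto
  ultimately show ?thesis by auto
next
  case False
  then have "coef (tens g (idm n)) J K = 0"
    using assms by (simp add: tens_def idm_def)
  moreover have "K \<noteq> J \<union> (\<lambda>x. x + n) ` J"
    using False shift_back_Un_shift[OF assms(4), of J] by auto
  ultimately show ?thesis by simp
qed

lemma coef_cap_comp_tens_idm:
  assumes "dom f = 0" "cod f = n" "I \<subseteq> {..<n}"
  shows "coef (comp (cap n) (tens f (idm n))) {} I = pairing_const (n - card I) * coef f I {}"
proof -
  have "coef (comp (cap n) (tens f (idm n))) {} I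
      = (\<Sum>K\<in>Pow {..<2*n}. coef (cap n) {} K * coef (tens f (idm n)) K I)"
    using assms by (simp add: comp_def tens_def idm_def cap_def sPfv_def mult_2)
  also have "\<dots> = (\<Sum>K\<in>Pow {..<2*n}. if K = I \<union> (\<lambda>x. x + n) ` I
      then pairing_const (n - card I) * coef f I {} else 0)"
    using assms by (intro sum.cong) (simp_all add: coef_cap_times_tens_idm)
  also have "\<dots> = pairing_const (n - card I) * coef f I {}"
    using assms(3) by (subst sum.delta) auto
  finally show ?thesis .
qed

lemma coef_tens_idm_comp_cup:
  assumes "dom g = n" "cod g = 0" "J \<subseteq> {..<n}"
  shows "coef (comp (tens g (idm n)) (cup n)) J {} = pairing_const (card J) * coef g {} J"
proof -
  have "coef (comp (tens g (idm n)) (cup n)) J {}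
      = (\<Sum>K\<in>Pow {..<2*n}. coef (tens g (idm n)) J K * coef (cup n) K {})"
    using assms by (simp add: comp_def tens_def idm_def cup_def sPf_def)
  also have "\<dots> = (\<Sum>K\<in>Pow {..<2*n}. if K = J \<union> (\<lambda>x. x + n) ` J
      then pairing_const (card J) * coef g {} J else 0)"
    using assms by (intro sum.cong) (simp_all add: coef_tens_idm_times_cup)
  also have "\<dots> = pairing_const (card J) * coef g {} J"
    using assms(3) by (subst sum.delta) auto
  finally show ?thesis .
qed

lemma pairing_const_diff_card_mult_Pf_sub:
  assumes "S \<subseteq> {..<n}"
  shows "pairing_const (n - card S) * Pf_sub M S = pairing_const n * Pf_sub M S"
proof (cases "even (card S)")
  case True
  moreover have "card S \<le> n" using assms by (metis card_lessThan card_mono finite_lessThan)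
  ultimately show ?thesis by (simp add: pairing_const_def)
next
  case False
  then show ?thesis using assms by (simp add: Pf_sub_eq_0_if_odd_card finite_subset)
qed

definition scalar :: "complex \<Rightarrow> mor" where
  "scalar z = \<lparr>dom = 0, cod = 0, coef = (\<lambda>J I. if J = {} \<and> I = {} then z else 0)\<rparr>"

lemma scalar_in_Pmor: "scalar z \<in> Pmor"
proof -
  define A :: "nat \<Rightarrow> nat \<Rightarrow> complex"
    where "A i j = (if i = 0 \<and> j = 1 then z else if i = 1 \<and> j = 0 then -z else 0)" for i j
  have "Pf_sub (\<lambda>_ _. 0) K = (if K = {} then 1 else 0)" if "finite K" for K
    using that by (cases "sorted_list_of_set K") (auto simp: Pf_sub_def)
  moreover have "Pf_sub A {..<2} = z"
    by (simp add: Pf_sub_def A_def numeral_2_eq_2)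
  ultimately have "(\<Sum>K\<in>Pow {..<2::nat}. Pf_sub A ({..<2} - K) * Pf_sub (\<lambda>_ _. 0) K)
      = (\<Sum>K\<in>Pow {..<2::nat}. if K = {} then z else 0)"
    by (intro sum.cong) (auto simp: finite_subset)
  then have "(\<Sum>K\<in>Pow {..<2::nat}. Pf_sub A ({..<2} - K) * Pf_sub (\<lambda>_ _. 0) K) = z"
    by simp
  then have "comp (sPfv 2 A) (sPf 2 (\<lambda>_ _. 0)) = scalar z"
    by (simp add: comp_def sPf_def sPfv_def scalar_def cong: if_cong)
  moreover have "comp (sPfv 2 A) (sPf 2 (\<lambda>_ _. 0)) \<in> Pmor"
    by (intro Pmor.intros) (auto simp: skew_def A_def sPf_def sPfv_def)
  ultimately show ?thesis by simp
qed

lemma tens_scalar: "tens (scalar z) f = f\<lparr>coef := \<lambda>J I. z * coef f J I\<rparr>"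
  by (simp add: tens_def scalar_def)

lemma scaled_in_Pmor: "f \<in> Pmor \<Longrightarrow> f\<lparr>coef := \<lambda>J I. z * coef f J I\<rparr> \<in> Pmor"
  using gen_tens[OF scalar_in_Pmor] by (simp add: tens_scalar)

lemma sPf_bra_in_Pmor:
  assumes "skew n M"
  shows "sPf_bra n M \<in> Pmor"
proof -
  define X where "X = comp (cap n) (tens (sPf n M) (idm n))"
  have "X \<in> Pmor"
    unfolding X_def cap_def
    by (intro Pmor.intros skew_pairing assms) (simp add: tens_def sPf_def sPfv_def idm_def)
  have "dom X = n" "cod X = 0"
    by (simp_all add: X_def comp_def tens_def cap_def sPf_def sPfv_def idm_def)
  have coef_X: "coef X J I = pairing_const n * coef (sPf_bra n M) J I" for J I
  proof (cases "J = {} \<and> I \<subseteq> {..<n}")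
    case True
    then show ?thesis
      using coef_cap_comp_tens_idm[of "sPf n M" n I] pairing_const_diff_card_mult_Pf_sub[of I n M]
      by (simp add: X_def sPf_def sPf_bra_def)
  qed (auto simp: X_def comp_def tens_def cap_def sPf_def sPfv_def idm_def sPf_bra_def)
  have "sPf_bra n M = X\<lparr>coef := \<lambda>J I. inverse (pairing_const n) * coef X J I\<rparr>"
    by (intro mor.equality)
      (simp_all add: \<open>dom X = n\<close> \<open>cod X = 0\<close> coef_X pairing_const_nonzero mult.assoc[symmetric] sPf_bra_def)
  with \<open>X \<in> Pmor\<close> show ?thesis by (simp add: scaled_in_Pmor)
qed

lemma sPfv_ket_in_Pmor:
  assumes "skew n M"
  shows "sPfv_ket n M \<in> Pmor"
proof -
  define X where "X = comp (tens (sPfv n M) (idm n)) (cup n)"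
  have "X \<in> Pmor"
    unfolding X_def cup_def
    by (intro Pmor.intros skew_pairing assms) (simp add: tens_def sPf_def sPfv_def idm_def)
  have "dom X = 0" "cod X = n"
    by (simp_all add: X_def comp_def tens_def cup_def sPf_def sPfv_def idm_def)
  have coef_X: "coef X J I = pairing_const n * coef (sPfv_ket n M) J I" for J I
  proof (cases "I = {} \<and> J \<subseteq> {..<n}")
    case True
    then have "J \<subseteq> {..<n}" by simp
    then have "finite J" "card J \<le> n"
      by (auto intro: finite_subset dest: card_mono[OF finite_lessThan])
    then have "card J = n - card ({..<n} - J)"
      using True by (simp add: card_Diff_subset)
    then show ?thesis
      using True coef_tens_idm_comp_cup[of "sPfv n M" n J]
        pairing_const_diff_card_mult_Pf_sub[of "{..<n} - J" n M]
      by (simp add: X_def sPfv_def sPfv_ket_def)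
  qed (auto simp: X_def comp_def tens_def cup_def sPf_def sPfv_def idm_def sPfv_ket_def)
  have "sPfv_ket n M = X\<lparr>coef := \<lambda>J I. inverse (pairing_const n) * coef X J I\<rparr>"
    by (intro mor.equality)
      (simp_all add: \<open>dom X = 0\<close> \<open>cod X = n\<close> coef_X pairing_const_nonzero mult.assoc[symmetric]
        sPfv_ket_def)
  with \<open>X \<in> Pmor\<close> show ?thesis by (simp add: scaled_in_Pmor)
qed

lemma skew_cnj: "skew n M \<Longrightarrow> skew n (\<lambda>i j. cnj (M i j))"
  unfolding skew_def by (metis complex_cnj_minus)

lemma dagger_sPf: "dagger (sPf n M) = sPf_bra n (\<lambda>i j. cnj (M i j))"
  by (simp add: dagger_def sPf_def sPf_bra_def Pf_sub_def cnj_pf fun_eq_iff)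

lemma dagger_sPfv: "dagger (sPfv n M) = sPfv_ket n (\<lambda>i j. cnj (M i j))"
  by (simp add: dagger_def sPfv_def sPfv_ket_def Pf_sub_def cnj_pf fun_eq_iff)

lemma dagger_idm: "dagger (idm n) = idm n"
  by (auto simp: dagger_def idm_def fun_eq_iff)

lemma dagger_comp: "cod f = dom g \<Longrightarrow> dagger (comp g f) = comp (dagger f) (dagger g)"
  by (simp add: dagger_def comp_def cnj_sum mult.commute fun_eq_iff)

lemma dagger_tens: "dagger (tens f g) = tens (dagger f) (dagger g)"
  by (simp add: dagger_def tens_def)

lemma dagger_in_Pmor: "f \<in> Pmor \<Longrightarrow> dagger f \<in> Pmor"
proof (induction rule: Pmor.induct)
  case (gen_comp f g)
  moreover have "cod (dagger g) = dom (dagger f)" using gen_comp by (simp add: dagger_def)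
  ultimately show ?case by (simp add: dagger_comp Pmor.gen_comp)
qed (simp_all add: dagger_sPf dagger_sPfv dagger_idm dagger_tens skew_cnj
    sPf_bra_in_Pmor sPfv_ket_in_Pmor Pmor.gen_id Pmor.gen_tens)

theorem mainTheorem11:
  shows "(\<forall>n M. skew n M \<longrightarrow> sPf_bra n M \<in> Pmor \<and> sPfv_ket n M \<in> Pmor)
         \<and> (\<forall>f \<in> Pmor. dagger f \<in> Pmor)"
  by (simp add: sPf_bra_in_Pmor sPfv_ket_in_Pmor dagger_in_Pmor)

end
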